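(* Define polynomials by $P_1(x)=x$, $Q_1(x)=1$, and for $m>1$, $P_m(x)=P_{m-1}(x)^2+Q_{m-1}(x)^2$ and $Q_m(x)=P_{m-1}(x)Q_{m-1}(x)$. For $m\ge1$ let $B_m$ be the $m\times m$ coloring matrix with entries $b_{ij}=1$ if $i\ge j$ and $b_{ij}=0$ if $i<j$, and let $F^{(m)}(x)=\sum_{n\ge1}t_{B_m}^{(m)}(n)x^n$. Then for every $m\ge1$, $$x^{2^{m-1}}\left(\frac{1}{\sqrt{x}}Q_{m+1}\!\left(\frac{F^{(m)}(x)}{\sqrt{x}}\right)-P_{m+1}\!\left(\frac{F^{(m)}(x)}{\sqrt{x}}\right)\right)=0,$$ where the left-hand side, expanded, is a polynomial expression in $x$ and $F^{(m)}(x)$.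
   Context: A plane tree is an unlabeled rooted tree in which the children of every vertex are linearly ordered. A coloring matrix is an $m\times m$ matrix $A=(a_{ij})$ with entries in $\{0,1\}$. An $A$-coloring of a plane tree assigns to each vertex a color in $\{1,\dots,m\}$ such that whenever a vertex of color $j$ is a child of a vertex of color $i$, $a_{ij}=1$. Let $t_A^{(i)}(n)$ be the number of pairs (plane tree with $n$ vertices, $A$-coloring of it) in which the root has color $i$. *)

theory Defs
  imports "HOL-Computational_Algebra.Computational_Algebra"
begin

(* Rooted trees with ordered children whose vertices carry labels of type 'a.
   A plane tree is a "unit ltree" (labels carry no information). *)
datatype 'a ltree = LNode 'a "'a ltree list"

fun nverts :: "'a ltree \<Rightarrow> nat" where
  "nverts (LNode _ ts) = 1 + sum_list (map nverts ts)"

fun lroot :: "'a ltree \<Rightarrow> 'a" where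
  "lroot (LNode c _) = c"

definition shape :: "nat ltree \<Rightarrow> unit ltree" where
  "shape C = map_ltree (\<lambda>_. ()) C"

(* A coloring matrix A of size m x m with 0/1 entries is represented by
   a :: nat => nat => bool, with a i j <-> a_{ij} = 1 (indices 1..m).
   A colouring of a plane tree T is a nat ltree C with shape C = T;
   it is an A-colouring iff all colours lie in {1..m} and whenever a vertex
   of colour j is a child of a vertex of colour i, a i j holds. *)
fun is_A_coloring :: "nat \<Rightarrow> (nat \<Rightarrow> nat \<Rightarrow> bool) \<Rightarrow> nat ltree \<Rightarrow> bool" where
  "is_A_coloring m a (LNode c ts) =
     (c \<in> {1..m} \<and> (\<forall>t\<in>set ts. a c (lroot t) \<and> is_A_coloring m a t))"

definition t_count :: "nat \<Rightarrow> (nat \<Rightarrow> nat \<Rightarrow> bool) \<Rightarrow> nat \<Rightarrow> nat \<Rightarrow> nat" where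
  "t_count m a i n = card {(T :: unit ltree, C :: nat ltree).
      nverts T = n \<and> shape C = T \<and> is_A_coloring m a C \<and> lroot C = i}"

definition B_mat :: "nat \<Rightarrow> nat \<Rightarrow> bool" where
  "B_mat i j = (i \<ge> j)"

definition F_ser :: "nat \<Rightarrow> real fps" where
  "F_ser m = Abs_fps (\<lambda>n. if n \<ge> 1 then real (t_count m B_mat m n) else 0)"

(* P_m, Q_m for m >= 1 (the value at m = 0 is irrelevant) *)
fun PQ :: "nat \<Rightarrow> 'a::comm_ring_1 poly \<times> 'a poly" where
  "PQ 0 = ([:0, 1:], 1)"
| "PQ (Suc 0) = ([:0, 1:], 1)"
| "PQ (Suc (Suc k)) = (let (p, q) = PQ (Suc k) in (p^2 + q^2, p * q))"

definition Pm :: "nat \<Rightarrow> 'a::comm_ring_1 poly" where "Pm m = fst (PQ m)"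
definition Qm :: "nat \<Rightarrow> 'a::comm_ring_1 poly" where "Qm m = snd (PQ m)"

end

theory Submission
  imports Defs
begin

(* Let f_i be the generating function of B_m-coloured plane trees with root colour i.
   Splitting off the first subtree of the root gives f_i = x + (f_1 + ... + f_i) f_i, and
   comparing the equations for i - 1 and i yields x f_i = f_(i-1) (x + f_i^2), where f_0 = x.
   With u_i = f_i(x^2)/x this reads u_i = u_(i-1) (1 + u_i^2), u_0 = x. Along this recursion
   Q_(k+1)(u_m) = u_(m-k) P_(k+1)(u_m) by induction on k, and k = m gives
   Q_(m+1)(u_m) = x P_(m+1)(u_m), which is the claim. *)

lemma nverts_neq_0 [simp]: "nverts t \<noteq> 0"
  by (cases t) auto

lemma nverts_map_ltree: "nverts (map_ltree f t) = nverts t"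
  by (induction t) (simp add: comp_def cong: map_cong)

definition colored_trees :: "nat \<Rightarrow> (nat \<Rightarrow> nat \<Rightarrow> bool) \<Rightarrow> nat \<Rightarrow> nat \<Rightarrow> nat ltree set" where
  "colored_trees m a i n = {C. is_A_coloring m a C \<and> lroot C = i \<and> nverts C = n}"

lemma t_count_eq_card_colored_trees: "t_count m a i n = card (colored_trees m a i n)"
proof -
  have "{(T, C). nverts T = n \<and> shape C = T \<and> is_A_coloring m a C \<and> lroot C = i}
      = (\<lambda>C. (shape C, C)) ` colored_trees m a i n"
    by (auto simp: colored_trees_def shape_def nverts_map_ltree)
  moreover have "inj_on (\<lambda>C. (shape C, C)) (colored_trees m a i n)"
    by (simp add: inj_on_def)
  ultimately show ?thesis
    unfolding t_count_def by (simp add: card_image)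
qed

lemma colored_trees_0: "colored_trees m a i 0 = {}"
  by (simp add: colored_trees_def)

lemma length_le_sum_nverts: "length ts \<le> sum_list (map nverts ts)"
proof (induction ts)
  case (Cons t ts)
  have "1 \<le> nverts t"
    using nverts_neq_0[of t] by linarith
  with Cons show ?case
    by simp
qed simp

lemma finite_colorings_nverts_le: "finite {C. is_A_coloring m a C \<and> nverts C \<le> n}"
proof (induction n)
  case 0
  then show ?case
    by simp
next
  case (Suc n)
  define V where "V = {C. is_A_coloring m a C \<and> nverts C \<le> n}"
  have "{C. is_A_coloring m a C \<and> nverts C \<le> Suc n}
      \<subseteq> (\<lambda>(c, ts). LNode c ts) ` ({1..m} \<times> {ts. set ts \<subseteq> V \<and> length ts \<le> n})"
  proof clarify
    fix C assume C: "is_A_coloring m a C" "nverts C \<le> Suc n"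
    obtain c ts where C_eq: "C = LNode c ts" by (cases C)
    have sum_le: "sum_list (map nverts ts) \<le> n"
      using C C_eq by simp
    have "set ts \<subseteq> V"
      using C C_eq sum_le member_le_sum_list[of _ "map nverts ts"] by (fastforce simp: V_def)
    moreover have "length ts \<le> sum_list (map nverts ts)"
      by (rule length_le_sum_nverts)
    then have "length ts \<le> n"
      using sum_le by simp
    ultimately show "C \<in> (\<lambda>(c, ts). LNode c ts) ` ({1..m} \<times> {ts. set ts \<subseteq> V \<and> length ts \<le> n})"
      using C C_eq by auto
  qed
  moreover have "finite {ts. set ts \<subseteq> V \<and> length ts \<le> n}"
    using finite_lists_length_le[OF Suc.IH[folded V_def]] by simp
  ultimately show ?case
    by (meson finite_SigmaI finite_atLeastAtMost finite_imageI finite_subset)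
qed

lemma finite_colored_trees: "finite (colored_trees m a i n)"
  by (rule finite_subset[OF _ finite_colorings_nverts_le[of m a n]]) (auto simp: colored_trees_def)

fun cons_child :: "'a ltree \<Rightarrow> 'a ltree \<Rightarrow> 'a ltree" where
  "cons_child t (LNode c ts) = LNode c (t # ts)"

lemma cons_child_eq_iff: "cons_child t r = cons_child t' r' \<longleftrightarrow> t = t' \<and> r = r'"
  by (cases r; cases r') auto

definition first_subtree_splits ::
    "nat \<Rightarrow> (nat \<Rightarrow> nat \<Rightarrow> bool) \<Rightarrow> nat \<Rightarrow> nat \<Rightarrow> ((nat \<times> nat) \<times> nat ltree \<times> nat ltree) set" where
  "first_subtree_splits m a i n =
    (SIGMA (c, k) : {c \<in> {1..m}. a i c} \<times> {..n}. colored_trees m a c k \<times> colored_trees m a i (n - k))"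

lemma bij_betw_cons_child:
  "bij_betw (\<lambda>(_, t, r). cons_child t r) (first_subtree_splits m a i n) (colored_trees m a i n - {LNode i []})"
proof (rule bij_betw_imageI)
  show "inj_on (\<lambda>(_, t, r). cons_child t r) (first_subtree_splits m a i n)"
    by (auto simp: inj_on_def first_subtree_splits_def colored_trees_def cons_child_eq_iff)
next
  show "(\<lambda>(_, t, r). cons_child t r) ` first_subtree_splits m a i n = colored_trees m a i n - {LNode i []}"
  proof (intro equalityI subsetI)
    fix C assume "C \<in> (\<lambda>(_, t, r). cons_child t r) ` first_subtree_splits m a i n"
    then obtain c k t r where "c \<in> {1..m}" "a i c" "k \<le> n" "t \<in> colored_trees m a c k"
      "r \<in> colored_trees m a i (n - k)" "C = cons_child t r"
      by (auto simp: first_subtree_splits_def)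
    then show "C \<in> colored_trees m a i n - {LNode i []}"
      by (cases r) (auto simp: colored_trees_def)
  next
    fix C assume C: "C \<in> colored_trees m a i n - {LNode i []}"
    then obtain t ts where C_eq: "C = LNode i (t # ts)"
      by (cases C) (auto simp: colored_trees_def neq_Nil_conv)
    have "((lroot t, nverts t), t, LNode i ts) \<in> first_subtree_splits m a i n"
      using C C_eq by (cases t) (auto simp: first_subtree_splits_def colored_trees_def)
    moreover have "C = cons_child t (LNode i ts)"
      using C_eq by simp
    ultimately show "C \<in> (\<lambda>(_, t, r). cons_child t r) ` first_subtree_splits m a i n"
      by force
  qed
qed

lemma card_colored_trees:
  assumes "i \<in> {1..m}"
  shows "card (colored_trees m a i n) = of_bool (n = 1) +
    (\<Sum>(c, k) \<in> {c \<in> {1..m}. a i c} \<times> {..n}.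
      card (colored_trees m a c k) * card (colored_trees m a i (n - k)))"
proof -
  have "LNode i [] \<in> colored_trees m a i n \<longleftrightarrow> n = 1"
    using assms by (auto simp: colored_trees_def)
  moreover have "card (colored_trees m a i n) =
      of_bool (LNode i [] \<in> colored_trees m a i n) + card (colored_trees m a i n - {LNode i []})"
    using card.remove[OF finite_colored_trees, of "LNode i []" m a i n]
    by (cases "LNode i [] \<in> colored_trees m a i n") simp_all
  moreover have "card (colored_trees m a i n - {LNode i []}) = card (first_subtree_splits m a i n)"
    using bij_betw_cons_child by (rule bij_betw_same_card[symmetric])
  moreover have "\<dots> = (\<Sum>(c, k) \<in> {c \<in> {1..m}. a i c} \<times> {..n}.
      card (colored_trees m a c k) * card (colored_trees m a i (n - k)))"
    unfolding first_subtree_splits_def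
  proof (subst card_SigmaI)
    show "finite ({c \<in> {1..m}. a i c} \<times> {..n})"
      by simp
  qed (auto simp: finite_colored_trees card_cartesian_product intro!: sum.cong)
  ultimately show ?thesis
    by simp
qed

definition colored_tree_gf :: "nat \<Rightarrow> (nat \<Rightarrow> nat \<Rightarrow> bool) \<Rightarrow> nat \<Rightarrow> 'a::comm_semiring_1 fps" where
  "colored_tree_gf m a i = Abs_fps (\<lambda>n. of_nat (card (colored_trees m a i n)))"

lemma colored_tree_gf_eq:
  assumes "i \<in> {1..m}"
  shows "colored_tree_gf m a i =
    (fps_X :: 'a::comm_semiring_1 fps) +
      (\<Sum>c \<in> {c \<in> {1..m}. a i c}. colored_tree_gf m a c) * colored_tree_gf m a i"
proof (rule fps_ext)
  fix n
  let ?f = "\<lambda>c k. of_nat (card (colored_trees m a c k)) :: 'a"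
  have "colored_tree_gf m a i $ n = of_bool (n = 1) +
      (\<Sum>(c, k) \<in> {c \<in> {1..m}. a i c} \<times> {..n}. ?f c k * ?f i (n - k))"
    using card_colored_trees[OF assms, of a n]
    by (simp add: colored_tree_gf_def of_nat_sum case_prod_beta)
  also have "\<dots> = (fps_X + (\<Sum>c \<in> {c \<in> {1..m}. a i c}. colored_tree_gf m a c) * colored_tree_gf m a i) $ n"
    by (simp add: colored_tree_gf_def fps_mult_nth fps_sum_nth atLeast0AtMost sum_distrib_right
        sum.cartesian_product[symmetric] sum.swap[of _ "{..n}"])
  finally show "colored_tree_gf m a i $ n = \<dots>" .
qed

lemma F_ser_eq_colored_tree_gf: "F_ser m = colored_tree_gf m B_mat m"
  by (rule fps_ext)
    (simp add: F_ser_def colored_tree_gf_def t_count_eq_card_colored_trees colored_trees_0 Suc_le_eq)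

lemma colored_tree_gf_B_mat_step:
  assumes "j \<in> {1..m}"
  shows "colored_tree_gf m B_mat j * fps_X =
    (if j = 1 then fps_X else colored_tree_gf m B_mat (j - 1)) *
      (fps_X + colored_tree_gf m B_mat j ^ 2 :: 'a::comm_ring_1 fps)"
proof -
  let ?f = "\<lambda>j. colored_tree_gf m B_mat j :: 'a fps"
  define f' where "f' = (if j = 1 then fps_X else ?f (j - 1))"
  define s where "s = (\<Sum>c = 1..j - 1. ?f c)"
  have B_row: "{c \<in> {1..m}. B_mat i c} = {1..i}" if "i \<le> m" for i
    using that by (auto simp: B_mat_def)
  have f'_eq: "f' - s * f' = fps_X"
  proof (cases "j = 1")
    case False
    then have "j - 1 \<in> {1..m}"
      using assms by auto
    then show ?thesis
      using colored_tree_gf_eq[of "j - 1" m B_mat] B_row[of "j - 1"] False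
      by (simp add: f'_def s_def diff_eq_eq add.commute)
  qed (simp add: f'_def s_def)
  have "?f j = fps_X + (\<Sum>c = 1..j. ?f c) * ?f j"
    using colored_tree_gf_eq[of j m B_mat] B_row[of j] assms by simp
  then have f_eq: "?f j - s * ?f j = fps_X + ?f j ^ 2"
    using assms by (cases j) (simp_all add: s_def algebra_simps power2_eq_square)
  have "?f j * fps_X = ?f j * (f' - s * f')"
    by (simp add: f'_eq)
  also have "\<dots> = f' * (?f j - s * ?f j)"
    by (simp add: algebra_simps)
  finally show ?thesis
    unfolding f_eq f'_def .
qed

(* f(x)/sqrt x, written as f(x^2)/x after renaming x to x^2 so that it is a Laurent series *)
definition over_sqrt_X :: "'a::field fps \<Rightarrow> 'a fls" where
  "over_sqrt_X f = fps_to_fls (f oo fps_X ^ 2) / fls_X"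

lemma over_sqrt_X_X: "over_sqrt_X fps_X = fls_X"
proof -
  define s where "s = (fls_X :: 'a fls)"
  have "fps_to_fls (fps_X oo fps_X ^ 2) = s ^ 2"
    by (simp add: s_def fps_to_fls_power)
  moreover have "s \<noteq> 0"
    by (simp add: s_def)
  ultimately show ?thesis
    by (simp add: over_sqrt_X_def s_def[symmetric] power2_eq_square)
qed

lemma over_sqrt_X_step:
  fixes f g :: "'a::field fps"
  assumes "f * fps_X = g * (fps_X + f ^ 2)"
  shows "over_sqrt_X f = over_sqrt_X g * (1 + over_sqrt_X f ^ 2)"
proof -
  define sub where "sub h = fps_to_fls (h oo fps_X ^ 2)" for h :: "'a fps"
  define s where "s = (fls_X :: 'a fls)"
  have "sub f * s ^ 2 = sub g * (s ^ 2 + sub f ^ 2)"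
    using arg_cong[OF assms, of sub]
    by (simp add: sub_def s_def fps_compose_mult_distrib fps_compose_add_distrib
        fls_times_fps_to_fls fps_to_fls_power power2_eq_square)
  moreover have "s \<noteq> 0"
    by (simp add: s_def)
  ultimately show ?thesis
    unfolding over_sqrt_X_def sub_def[symmetric] s_def[symmetric]
    by (simp add: field_simps power2_eq_square)
qed

lemma Pm_Suc_Suc: "Pm (Suc (Suc k)) = Pm (Suc k) ^ 2 + Qm (Suc k) ^ 2"
  and Qm_Suc_Suc: "Qm (Suc (Suc k)) = Pm (Suc k) * Qm (Suc k)"
  by (simp_all add: Pm_def Qm_def split: prod.splits)

lemma poly_Qm_eq_mult_poly_Pm:
  fixes u :: "nat \<Rightarrow> 'a::comm_ring_1"
  assumes rec: "\<And>j. j \<in> {1..m} \<Longrightarrow> u j = u (j - 1) * (1 + u j ^ 2)"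
  shows "1 \<le> k \<Longrightarrow> k \<le> m \<Longrightarrow> poly (Qm (k + 1)) (u m) = u (m - k) * poly (Pm (k + 1)) (u m)"
proof (induction k rule: dec_induct)
  case base
  then have "u m = u (m - 1) * (1 + u m ^ 2)"
    using rec by simp
  then show ?case
    by (simp add: Pm_Suc_Suc Qm_Suc_Suc Pm_def Qm_def algebra_simps)
next
  case (step k)
  define p where "p = poly (Pm (k + 1)) (u m)"
  have IH: "poly (Qm (k + 1)) (u m) = u (m - k) * p"
    using step by (simp add: p_def)
  have "poly (Qm (Suc k + 1)) (u m) = u (m - k) * p ^ 2"
    using IH by (simp add: p_def Qm_Suc_Suc power2_eq_square)
  also have "\<dots> = u (m - Suc k) * (1 + u (m - k) ^ 2) * p ^ 2"
    using rec[of "m - k"] step by (simp add: Suc_diff_Suc)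
  also have "\<dots> = u (m - Suc k) * poly (Pm (Suc k + 1)) (u m)"
    using IH by (simp add: p_def Pm_Suc_Suc algebra_simps)
  finally show ?case .
qed

theorem theorem43:
  fixes m :: nat
  assumes "m \<ge> 1"
  shows "let s = (fls_X :: real fls);
             G = fps_to_fls (fps_compose (F_ser m) (fps_X ^ 2))
         in s ^ (2 ^ m) * (inverse s * poly (Qm (m + 1)) (G / s) - poly (Pm (m + 1)) (G / s)) = 0"
proof -
  define u where "u j = over_sqrt_X (if j = 0 then fps_X else colored_tree_gf m B_mat j :: real fps)" for j
  have "u j = u (j - 1) * (1 + u j ^ 2)" if "j \<in> {1..m}" for j
    using over_sqrt_X_step[OF colored_tree_gf_B_mat_step[OF that]] that
    by (cases "j = 1") (simp_all add: u_def)
  then have "poly (Qm (m + 1)) (u m) = u 0 * poly (Pm (m + 1)) (u m)"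
    using poly_Qm_eq_mult_poly_Pm[of m u m] assms by simp
  moreover have "u 0 = fls_X"
    by (simp add: u_def over_sqrt_X_X)
  moreover have "u m = fps_to_fls (F_ser m oo fps_X ^ 2) / fls_X"
    using assms by (simp add: u_def over_sqrt_X_def F_ser_eq_colored_tree_gf)
  ultimately show ?thesis
    by (simp add: Let_def)
qed

end
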